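(* Consider two $K$-tier open access networks as described in the context that are identical (same point processes $\Phi_k$, powers $P_k$, target SIRs $\beta_k$, path loss exponent $\alpha$) except for their channel parameters: the first has parameters $\{\Delta_k\},\{\Psi_k\}$ and the second $\{\Delta'_k\},\{\Psi'_k\}$. If $\Delta_k\ge\Delta'_k$ and $\Psi_k\le\Psi'_k$ for all $k\in\{1,\dots,K\}$, then the coverage probability of the first network is greater than or equal to that of the second.
   Context: Downlink $K$-tier cellular network with tiers indexed by $\mathcal{K}=\{1,\dots,K\}$. For each $k$, tier-$k$ base stations (BSs) are located at the points of a stationary point process $\Phi_k\subset\mathbb{R}^2$ (the $\Phi_k$ need not be independent). Tier-$k$ BSs transmit with per-user power $P_k>0$ and have target SIR $\beta_k>0$; $\alpha$ is the path loss exponent. A typical user is at the origin. Each tier has positive integer channel parameters $\Delta_k$ and $\Psi_k$ (in the multi-antenna interpretation, with $M_k$ antennas and $\Psi_k\le M_k$ users served per resource block, $\Delta_k=M_k-\Psi_k+1$). Each BS at $x\in\Phi_k$ carries two channel-power marks $h_{kx}\sim\Gamma(\Delta_k,1)$ (desired link) and $g_{kx}\sim\Gamma(\Psi_k,1)$ (interfering link), all marks mutually independent and independent of the point processes. The SIR from the BS at $x_k\in\Phi_k$ is $\mathrm{SIR}(x_k)=\dfrac{P_kh_{kx_k}\|x_k\|^{-\alpha}}{\sum_{j\in\mathcal{K}}\sum_{y\in\Phi_j\setminus\{x_k\}}P_jg_{jy}\|y\|^{-\alpha}}$. The open access coverage probability is $\mathtt{P_c}=\mathbb{P}\big(\bigcup_{k\in\mathcal{K}}\{\max_{x_k\in\Phi_k}\mathrm{SIR}(x_k)>\beta_k\}\big)$.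 $\Gamma(a,1)$ denotes the Gamma distribution with shape $a$ and scale $1$. *)

theory Defs
  imports "HOL-Probability.Probability"
begin

text \<open>Points of the plane are vectors in real^2. A point process of tier k is represented
  by an enumeration: its number of points N k w (possibly infinite) and its points
  X k n w for n < N k w.\<close>

definition PPset :: "(nat \<Rightarrow> nat \<Rightarrow> 'a \<Rightarrow> real^2) \<Rightarrow> (nat \<Rightarrow> 'a \<Rightarrow> enat) \<Rightarrow> nat \<Rightarrow> 'a \<Rightarrow> (real^2) set"
  where "PPset X N k w = {X k n w | n. enat n < N k w}"

text \<open>Gamma(a,1) density for a positive integer shape a: this is the Erlang density
  with parameter a - 1 and rate 1, i.e. x^(a-1) e^(-x) / (a-1)! for x >= 0.\<close>

definition gamma_density :: "nat \<Rightarrow> real \<Rightarrow> real"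
  where "gamma_density a = erlang_density (a - 1) 1"

definition interference ::
  "nat \<Rightarrow> (nat \<Rightarrow> real) \<Rightarrow> real \<Rightarrow> (nat \<Rightarrow> nat \<Rightarrow> 'a \<Rightarrow> real^2) \<Rightarrow> (nat \<Rightarrow> 'a \<Rightarrow> enat)
    \<Rightarrow> (nat \<Rightarrow> nat \<Rightarrow> 'a \<Rightarrow> real) \<Rightarrow> 'a \<Rightarrow> real^2 \<Rightarrow> ennreal"
  where "interference K P \<alpha> X N g w x =
    (\<Sum>j\<in>{1..K}. \<Sum>\<^sub>\<infinity> m\<in>{m. enat m < N j w \<and> X j m w \<noteq> x}.
        ennreal (P j * g j m w * norm (X j m w) powr (- \<alpha>)))"

definition SIR ::
  "nat \<Rightarrow> (nat \<Rightarrow> real) \<Rightarrow> real \<Rightarrow> (nat \<Rightarrow> nat \<Rightarrow> 'a \<Rightarrow> real^2) \<Rightarrow> (nat \<Rightarrow> 'a \<Rightarrow> enat)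
    \<Rightarrow> (nat \<Rightarrow> nat \<Rightarrow> 'a \<Rightarrow> real) \<Rightarrow> (nat \<Rightarrow> nat \<Rightarrow> 'a \<Rightarrow> real) \<Rightarrow> nat \<Rightarrow> nat \<Rightarrow> 'a \<Rightarrow> ennreal"
  where "SIR K P \<alpha> X N h g k n w =
    ennreal (P k * h k n w * norm (X k n w) powr (- \<alpha>)) / interference K P \<alpha> X N g w (X k n w)"

text \<open>Open access coverage: for some tier k, the largest SIR over tier-k BSs exceeds beta_k
  (the supremum exceeds beta_k iff some BS has SIR above beta_k).\<close>

definition covered ::
  "nat \<Rightarrow> (nat \<Rightarrow> real) \<Rightarrow> (nat \<Rightarrow> real) \<Rightarrow> real \<Rightarrow> (nat \<Rightarrow> nat \<Rightarrow> 'a \<Rightarrow> real^2) \<Rightarrow> (nat \<Rightarrow> 'a \<Rightarrow> enat)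
    \<Rightarrow> (nat \<Rightarrow> nat \<Rightarrow> 'a \<Rightarrow> real) \<Rightarrow> (nat \<Rightarrow> nat \<Rightarrow> 'a \<Rightarrow> real) \<Rightarrow> 'a \<Rightarrow> bool"
  where "covered K P \<beta> \<alpha> X N h g w \<longleftrightarrow>
    (\<exists>k\<in>{1..K}. (SUP n\<in>{n. enat n < N k w}. SIR K P \<alpha> X N h g k n w) > ennreal (\<beta> k))"

definition coverage_prob ::
  "'a measure \<Rightarrow> nat \<Rightarrow> (nat \<Rightarrow> real) \<Rightarrow> (nat \<Rightarrow> real) \<Rightarrow> real \<Rightarrow> (nat \<Rightarrow> nat \<Rightarrow> 'a \<Rightarrow> real^2)
    \<Rightarrow> (nat \<Rightarrow> 'a \<Rightarrow> enat) \<Rightarrow> (nat \<Rightarrow> nat \<Rightarrow> 'a \<Rightarrow> real) \<Rightarrow> (nat \<Rightarrow> nat \<Rightarrow> 'a \<Rightarrow> real) \<Rightarrow> real"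
  where "coverage_prob M K P \<beta> \<alpha> X N h g =
    measure M {w \<in> space M. covered K P \<beta> \<alpha> X N h g w}"

definition stationary_pp :: "'a measure \<Rightarrow> ('a \<Rightarrow> (real^2) set) \<Rightarrow> bool"
  where "stationary_pp M Phi \<longleftrightarrow>
    (\<forall>(v::real^2) (m::nat) (B::nat \<Rightarrow> (real^2) set) (c::nat \<Rightarrow> nat).
       (\<forall>i<m. B i \<in> sets borel \<and> bounded (B i)) \<longrightarrow>
       measure M {w \<in> space M. \<forall>i<m. card (Phi w \<inter> (\<lambda>y. v + y) ` B i) = c i}
       = measure M {w \<in> space M. \<forall>i<m. card (Phi w \<inter> B i) = c i})"

definition point_process :: "'a measure \<Rightarrow> ('a \<Rightarrow> enat) \<Rightarrow> (nat \<Rightarrow> 'a \<Rightarrow> real^2) \<Rightarrow> bool"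
  where "point_process M N X \<longleftrightarrow>
    N \<in> measurable M (count_space UNIV) \<and> (\<forall>n. X n \<in> borel_measurable M) \<and>
    (AE w in M. inj_on (\<lambda>n. X n w) {n. enat n < N w}) \<and>
    (AE w in M. \<forall>B. bounded B \<longrightarrow> finite ({X n w | n. enat n < N w} \<inter> B))"

definition pp_space :: "nat \<Rightarrow> ((nat \<Rightarrow> nat \<Rightarrow> real^2) \<times> (nat \<Rightarrow> enat)) measure"
  where "pp_space K = (PiM {1..K} (\<lambda>_. PiM UNIV (\<lambda>_. borel))) \<Otimes>\<^sub>M (PiM {1..K} (\<lambda>_. count_space UNIV))"

definition pp_var :: "nat \<Rightarrow> (nat \<Rightarrow> nat \<Rightarrow> 'a \<Rightarrow> real^2) \<Rightarrow> (nat \<Rightarrow> 'a \<Rightarrow> enat) \<Rightarrow> 'a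
    \<Rightarrow> (nat \<Rightarrow> nat \<Rightarrow> real^2) \<times> (nat \<Rightarrow> enat)"
  where "pp_var K X N w = ((\<lambda>k\<in>{1..K}. \<lambda>n. X k n w), (\<lambda>k\<in>{1..K}. N k w))"

text \<open>Mark index set: (True,k,n) is the desired-link mark h, (False,k,n) the interfering-link
  mark g of the n-th BS of tier k.\<close>

definition mark_idx :: "nat \<Rightarrow> (bool \<times> nat \<times> nat) set"
  where "mark_idx K = UNIV \<times> {1..K} \<times> UNIV"

definition mark_var :: "(nat \<Rightarrow> nat \<Rightarrow> 'a \<Rightarrow> real) \<Rightarrow> (nat \<Rightarrow> nat \<Rightarrow> 'a \<Rightarrow> real)
    \<Rightarrow> bool \<times> nat \<times> nat \<Rightarrow> 'a \<Rightarrow> real"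
  where "mark_var h g i w = (case i of (b, k, n) \<Rightarrow> if b then h k n w else g k n w)"

definition gamma_marks ::
  "'a measure \<Rightarrow> nat \<Rightarrow> (nat \<Rightarrow> nat \<Rightarrow> 'a \<Rightarrow> real^2) \<Rightarrow> (nat \<Rightarrow> 'a \<Rightarrow> enat)
    \<Rightarrow> (nat \<Rightarrow> nat) \<Rightarrow> (nat \<Rightarrow> nat) \<Rightarrow> (nat \<Rightarrow> nat \<Rightarrow> 'a \<Rightarrow> real) \<Rightarrow> (nat \<Rightarrow> nat \<Rightarrow> 'a \<Rightarrow> real) \<Rightarrow> bool"
  where "gamma_marks M K X N \<Delta> \<Psi> h g \<longleftrightarrow>
    (\<forall>k\<in>{1..K}. \<forall>n. distributed M lborel (h k n) (\<lambda>x. ennreal (gamma_density (\<Delta> k) x))) \<and>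
    (\<forall>k\<in>{1..K}. \<forall>n. distributed M lborel (g k n) (\<lambda>x. ennreal (gamma_density (\<Psi> k) x))) \<and>
    prob_space.indep_vars M (\<lambda>_. borel) (mark_var h g) (mark_idx K) \<and>
    pp_var K X N \<in> measurable M (pp_space K) \<and>
    prob_space.indep_set M
       (sets (vimage_algebra (space M) (pp_var K X N) (pp_space K)))
       (sets (vimage_algebra (space M) (\<lambda>w. \<lambda>i\<in>mark_idx K. mark_var h g i w)
           (PiM (mark_idx K) (\<lambda>_. borel))))"

end

theory Submission
  imports Defs
begin

text \<open>For a fixed configuration of base stations the coverage event is increasing in every
  desired-link mark and decreasing in every interfering-link mark. The CDF of Gamma(a,1) for integer a
  is an Erlang CDF, which decreases in a, so its quantile function increases in a. Realising the marks
  of both networks as quantiles of one family of independent uniforms, independent of the point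
  processes, changes neither coverage probability, and in this coupling every outcome covered in the
  second network is covered in the first.\<close>

section \<open>Componentwise images of product measures\<close>

lemma prod_emb_vimage_componentwise:
  assumes "J \<subseteq> I"
    and f: "\<And>i. i \<in> I \<Longrightarrow> f i \<in> measurable (M i) (N i)"
  shows "prod_emb I M J (\<Pi>\<^sub>E j\<in>J. f j -` A j \<inter> space (M j)) =
    (\<lambda>x. \<lambda>i\<in>I. f i (x i)) -` prod_emb I N J (Pi\<^sub>E J A) \<inter> space (PiM I M)"
proof (intro set_eqI iffI)
  fix x assume "x \<in> prod_emb I M J (\<Pi>\<^sub>E j\<in>J. f j -` A j \<inter> space (M j))"
  then have "x \<in> space (PiM I M)" and "\<And>j. j \<in> J \<Longrightarrow> f j (x j) \<in> A j"
    by (auto simp: prod_emb_def space_PiM)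
  then show "x \<in> (\<lambda>x. \<lambda>i\<in>I. f i (x i)) -` prod_emb I N J (Pi\<^sub>E J A) \<inter> space (PiM I M)"
    using assms(1) by (auto simp: prod_emb_def space_PiM intro: measurable_space[OF f])
next
  fix x assume x: "x \<in> (\<lambda>x. \<lambda>i\<in>I. f i (x i)) -` prod_emb I N J (Pi\<^sub>E J A) \<inter> space (PiM I M)"
  have "f j (x j) \<in> A j" if j: "j \<in> J" for j
  proof -
    from x have "restrict (\<lambda>i\<in>I. f i (x i)) J \<in> Pi\<^sub>E J A" by (simp add: prod_emb_def)
    from PiE_mem[OF this j] show ?thesis using j assms(1) by auto
  qed
  moreover have "x \<in> space (PiM I M)" using x by auto
  ultimately show "x \<in> prod_emb I M J (\<Pi>\<^sub>E j\<in>J. f j -` A j \<inter> space (M j))"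
    using assms(1) f by (auto simp: prod_emb_def space_PiM measurable_space)
qed

lemma distr_PiM_componentwise:
  assumes M: "\<And>i. i \<in> I \<Longrightarrow> prob_space (M i)"
    and f: "\<And>i. i \<in> I \<Longrightarrow> f i \<in> measurable (M i) (N i)"
  shows "distr (PiM I M) (PiM I N) (\<lambda>x. \<lambda>i\<in>I. f i (x i)) = PiM I (\<lambda>i. distr (M i) (N i) (f i))"
proof -
  let ?F = "\<lambda>x. \<lambda>i\<in>I. f i (x i)"
  let ?D = "\<lambda>i. distr (M i) (N i) (f i)"
  have sets_PiM_N: "sets (PiM I N) = sets (PiM I ?D)"
    by (rule sets_PiM_cong[OF refl]) (simp only: sets_distr)
  have D: "\<And>i. i \<in> I \<Longrightarrow> prob_space (?D i)"
    using M f by (simp add: prob_space.prob_space_distr)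
  interpret prob_space "PiM I ?D" using D by (rule prob_space_PiM)
  have F: "?F \<in> measurable (PiM I M) (PiM I N)"
  proof (rule measurable_restrict)
    fix i assume i: "i \<in> I"
    show "(\<lambda>x. f i (x i)) \<in> measurable (PiM I M) (N i)"
      by (rule measurable_compose[OF measurable_component_singleton[OF i, of M] f[OF i]])
  qed
  show ?thesis
  proof (rule measure_eqI_PiM_infinite[symmetric, OF refl])
    show "sets (distr (PiM I M) (PiM I N) ?F) = sets (PiM I ?D)"
      by (simp only: sets_distr sets_PiM_N)
    show "finite_measure (PiM I ?D)" by unfold_locales
    fix A J assume J: "finite J" "J \<subseteq> I" and A: "\<And>i. i \<in> J \<Longrightarrow> A i \<in> sets (?D i)"
    have A': "\<And>i. i \<in> J \<Longrightarrow> A i \<in> sets (N i)" using A by (simp only: sets_distr)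
    have fJ: "\<And>i. i \<in> J \<Longrightarrow> f i \<in> measurable (M i) (N i)" using f J(2) by blast
    have emb: "prod_emb I ?D J E = prod_emb I N J E" for E
      by (simp add: prod_emb_def space_PiM)
    have "PiM I ?D (prod_emb I ?D J (Pi\<^sub>E J A)) = (\<Prod>j\<in>J. ?D j (A j))"
      by (rule emeasure_PiM_emb[OF D J(2,1) A])
    also have "\<dots> = (\<Prod>j\<in>J. M j (f j -` A j \<inter> space (M j)))"
      using fJ A' by (intro prod.cong refl emeasure_distr)
    also have "\<dots> = PiM I M (prod_emb I M J (\<Pi>\<^sub>E j\<in>J. f j -` A j \<inter> space (M j)))"
      using fJ A' by (intro emeasure_PiM_emb[symmetric, OF M J(2,1)] measurable_sets)
    also have "\<dots> = PiM I M (?F -` prod_emb I ?D J (Pi\<^sub>E J A) \<inter> space (PiM I M))"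
      by (simp only: emb prod_emb_vimage_componentwise[OF J(2) f])
    also have "\<dots> = distr (PiM I M) (PiM I N) ?F (prod_emb I ?D J (Pi\<^sub>E J A))"
      using J A by (intro emeasure_distr[symmetric, OF F]) (auto simp: sets_PiM_N intro: sets_PiM_I)
    finally show "PiM I ?D (prod_emb I ?D J (Pi\<^sub>E J A)) =
        distr (PiM I M) (PiM I N) ?F (prod_emb I ?D J (Pi\<^sub>E J A))" .
  qed
qed

lemma (in prob_space) distr_pair_eq_pair_measure_if_indep_set:
  assumes X: "random_variable S X" and Y: "random_variable T Y"
    and indep: "indep_set (sets (vimage_algebra (space M) X S)) (sets (vimage_algebra (space M) Y T))"
  shows "distr M (S \<Otimes>\<^sub>M T) (\<lambda>w. (X w, Y w)) = distr M S X \<Otimes>\<^sub>M distr M T Y"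
proof (rule pair_measure_eqI[symmetric])
  show "sigma_finite_measure (distr M S X)" "sigma_finite_measure (distr M T Y)"
    using X Y by (simp_all add: prob_space_imp_sigma_finite prob_space_distr)
  show "sets (distr M S X \<Otimes>\<^sub>M distr M T Y) = sets (distr M (S \<Otimes>\<^sub>M T) (\<lambda>w. (X w, Y w)))"
    by simp
  fix A B assume "A \<in> sets (distr M S X)" and "B \<in> sets (distr M T Y)"
  then have A: "A \<in> sets S" and B: "B \<in> sets T" by simp_all
  have XY: "(\<lambda>w. (X w, Y w)) \<in> measurable M (S \<Otimes>\<^sub>M T)" using X Y by (rule measurable_Pair)
  have "(\<lambda>w. (X w, Y w)) -` (A \<times> B) \<inter> space M = (X -` A \<inter> space M) \<inter> (Y -` B \<inter> space M)"
    by auto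
  moreover have "prob ((X -` A \<inter> space M) \<inter> (Y -` B \<inter> space M)) = prob (X -` A \<inter> space M) * prob (Y -` B \<inter> space M)"
    by (rule indep_setD[OF indep in_vimage_algebra[OF A] in_vimage_algebra[OF B]])
  ultimately show "emeasure (distr M S X) A * emeasure (distr M T Y) B =
      emeasure (distr M (S \<Otimes>\<^sub>M T) (\<lambda>w. (X w, Y w))) (A \<times> B)"
    using A B X Y XY by (simp add: emeasure_distr emeasure_eq_measure ennreal_mult)
qed

section \<open>Quantile transforms and Gamma laws\<close>

definition quantile :: "real measure \<Rightarrow> real \<Rightarrow> real" where
  "quantile \<mu> u = Inf {x. u \<le> cdf \<mu> x}"

abbreviation unit_uniform :: "real measure" where
  "unit_uniform \<equiv> restrict_space lborel {0<..<1}"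

lemma prob_space_unit_uniform: "prob_space unit_uniform"
  by (auto simp add: emeasure_restrict_space space_restrict_space intro!: prob_spaceI)

lemma distr_quantile: "real_distribution \<mu> \<Longrightarrow> distr unit_uniform borel (quantile \<mu>) = \<mu>"
  unfolding quantile_def by (rule cdf_distribution.distr_I_eq_M) (simp add: cdf_distribution_def)

lemma measurable_quantile:
  assumes "real_distribution \<mu>" shows "quantile \<mu> \<in> measurable unit_uniform borel"
proof -
  have "quantile \<mu> \<in> borel_measurable (restrict_space borel {0<..<1})"
    unfolding quantile_def using assms
    by (rule cdf_distribution.measurable_CI[unfolded cdf_distribution_def])
  moreover have "measurable unit_uniform borel = measurable (restrict_space borel {0<..<1::real}) (borel::real measure)"
    by (rule measurable_cong_sets) (simp_all add: sets_restrict_space_cong[OF sets_lborel])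
  ultimately show ?thesis by simp
qed

lemma quantile_le_if_cdf_le:
  assumes \<mu>: "real_distribution \<mu>" and \<nu>: "real_distribution \<nu>"
    and le: "\<And>x. cdf \<mu> x \<le> cdf \<nu> x" and u: "u \<in> {0<..<1}"
  shows "quantile \<nu> u \<le> quantile \<mu> u"
proof -
  interpret m: cdf_distribution \<mu> using \<mu> by (simp add: cdf_distribution_def)
  interpret n: cdf_distribution \<nu> using \<nu> by (simp add: cdf_distribution_def)
  have "u \<le> cdf \<mu> (quantile \<mu> u)"
    using m.pseudoinverse[of u "quantile \<mu> u"] u unfolding quantile_def by auto
  also have "\<dots> \<le> cdf \<nu> (quantile \<mu> u)" by (rule le)
  finally show ?thesis
    using n.pseudoinverse[of u "quantile \<mu> u"] u unfolding quantile_def by auto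
qed

definition gamma_law :: "nat \<Rightarrow> real measure" where
  "gamma_law a = density lborel (\<lambda>x. ennreal (gamma_density a x))"

lemma real_distribution_gamma_law: "real_distribution (gamma_law a)"
proof -
  have "prob_space (gamma_law a)"
    unfolding gamma_law_def gamma_density_def by (rule prob_space_erlang_density) simp
  then show ?thesis unfolding real_distribution_def real_distribution_axioms_def gamma_law_def by simp
qed

lemma cdf_gamma_law: "cdf (gamma_law a) x = erlang_CDF (a - 1) 1 x"
proof -
  have "emeasure (gamma_law a) {..x} = erlang_CDF (a - 1) 1 x"
    unfolding gamma_law_def gamma_density_def by (rule emeasure_erlang_density) simp
  then show ?thesis unfolding cdf_def measure_def by simp
qed

lemma erlang_CDF_antimono: "k \<le> k' \<Longrightarrow> erlang_CDF k' 1 x \<le> erlang_CDF k 1 x"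
  unfolding erlang_CDF_def by (auto intro!: sum_mono2)

lemma quantile_gamma_law_mono:
  "a' \<le> a \<Longrightarrow> u \<in> {0<..<1} \<Longrightarrow> quantile (gamma_law a') u \<le> quantile (gamma_law a) u"
  by (rule quantile_le_if_cdf_le[OF real_distribution_gamma_law real_distribution_gamma_law])
    (auto simp: cdf_gamma_law intro: erlang_CDF_antimono)

section \<open>Monotonicity of coverage in the marks\<close>

lemma ennreal_inverse_antimono: "(b::ennreal) \<le> c \<Longrightarrow> inverse c \<le> inverse b"
proof (cases "b = 0")
  case False
  assume bc: "b \<le> c"
  show ?thesis
  proof (cases "c = top")
    case False
    then obtain c' where c: "c = ennreal c'" "c' \<ge> 0" by (cases c) auto
    with bc False obtain b' where b: "b = ennreal b'" "b' \<ge> 0"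
      by (cases b) (auto simp: top_unique)
    have "b' > 0" using b \<open>b \<noteq> 0\<close> by auto
    then have "c' > 0" using b c bc by (auto simp: ennreal_le_iff)
    then show ?thesis using b c bc \<open>b' > 0\<close>
      by (simp add: inverse_ennreal ennreal_le_iff le_imp_inverse_le)
  qed simp
qed simp

lemma ennreal_divide_antimono: "(b::ennreal) \<le> c \<Longrightarrow> a / c \<le> a / b"
  unfolding divide_ennreal_def by (intro mult_left_mono ennreal_inverse_antimono) auto

lemma covered_cong:
  assumes "\<And>k n. k \<in> {1..K} \<Longrightarrow> X k n w = X' k n w'"
    and "\<And>k. k \<in> {1..K} \<Longrightarrow> N k w = N' k w'"
    and "\<And>k n. k \<in> {1..K} \<Longrightarrow> h k n w = h' k n w'"
    and "\<And>k n. k \<in> {1..K} \<Longrightarrow> g k n w = g' k n w'"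
  shows "covered K P \<beta> \<alpha> X N h g w = covered K P \<beta> \<alpha> X' N' h' g' w'"
proof -
  have "interference K P \<alpha> X N g w (X k n w) = interference K P \<alpha> X' N' g' w' (X' k n w')"
    if "k \<in> {1..K}" for k n
    unfolding interference_def using assms that
    by (intro sum.cong refl arg_cong2[where f=infsum] ext) auto
  then show ?thesis unfolding covered_def SIR_def
    using assms by (intro bex_cong refl arg_cong2[where f="(<)"] SUP_cong) auto
qed

lemma interference_antimono:
  assumes "\<And>k. k \<in> {1..K} \<Longrightarrow> P k \<ge> 0"
    and "\<And>k n. k \<in> {1..K} \<Longrightarrow> g' k n w \<le> g k n w"
  shows "interference K P \<alpha> X N g' w x \<le> interference K P \<alpha> X N g w x"
  unfolding interference_def
  using assms by (intro sum_mono infsum_mono ennreal_leI mult_right_mono mult_left_mono)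
    (auto simp: nonneg_summable_on_complete)

lemma covered_mono:
  assumes "covered K P \<beta> \<alpha> X N h g w"
    and P: "\<And>k. k \<in> {1..K} \<Longrightarrow> P k \<ge> 0"
    and h: "\<And>k n. k \<in> {1..K} \<Longrightarrow> h k n w \<le> h' k n w"
    and g: "\<And>k n. k \<in> {1..K} \<Longrightarrow> g' k n w \<le> g k n w"
  shows "covered K P \<beta> \<alpha> X N h' g' w"
proof -
  have SIR: "SIR K P \<alpha> X N h g k n w \<le> SIR K P \<alpha> X N h' g' k n w" if k: "k \<in> {1..K}" for k n
  proof -
    have "SIR K P \<alpha> X N h g k n w \<le>
        ennreal (P k * h' k n w * norm (X k n w) powr - \<alpha>) / interference K P \<alpha> X N g w (X k n w)"
      unfolding SIR_def using P[OF k] h[OF k, of n]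
      by (intro divide_right_mono_ennreal ennreal_leI mult_right_mono mult_left_mono) auto
    also have "\<dots> \<le> SIR K P \<alpha> X N h' g' k n w"
      unfolding SIR_def using P g by (intro ennreal_divide_antimono interference_antimono)
    finally show ?thesis .
  qed
  from assms(1) obtain k where k: "k \<in> {1..K}"
    and "ennreal (\<beta> k) < (SUP n\<in>{n. enat n < N k w}. SIR K P \<alpha> X N h g k n w)"
    unfolding covered_def by blast
  moreover have "(SUP n\<in>{n. enat n < N k w}. SIR K P \<alpha> X N h g k n w) \<le>
      (SUP n\<in>{n. enat n < N k w}. SIR K P \<alpha> X N h' g' k n w)"
    using SIR[OF k] by (intro SUP_mono) auto
  ultimately show ?thesis unfolding covered_def by (auto intro: less_le_trans)
qed

section \<open>The quantile coupling\<close>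

type_synonym config = "((nat \<Rightarrow> nat \<Rightarrow> real^2) \<times> (nat \<Rightarrow> enat)) \<times> (bool \<times> nat \<times> nat \<Rightarrow> real)"

definition config_space :: "nat \<Rightarrow> config measure" where
  "config_space K = pp_space K \<Otimes>\<^sub>M PiM (mark_idx K) (\<lambda>_. borel)"

definition covered_config ::
  "nat \<Rightarrow> (nat \<Rightarrow> real) \<Rightarrow> (nat \<Rightarrow> real) \<Rightarrow> real \<Rightarrow> config \<Rightarrow> bool" where
  "covered_config K P \<beta> \<alpha> z =
    covered K P \<beta> \<alpha> (\<lambda>k n (_::unit). fst (fst z) k n) (\<lambda>k _. snd (fst z) k)
      (\<lambda>k n _. snd z (True, k, n)) (\<lambda>k n _. snd z (False, k, n)) ()"

lemma infsum_ennreal_eq_suminf: "infsum (f::nat \<Rightarrow> ennreal) A = (\<Sum>m. if m \<in> A then f m else 0)"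
proof -
  have "infsum f A = infsum (\<lambda>m. if m \<in> A then f m else 0) UNIV"
    by (intro infsum_cong_neutral) auto
  also have "\<dots> = (\<Sum>m. if m \<in> A then f m else 0)"
    by (rule sums_unique[OF has_sum_imp_sums[OF has_sum_infsum]])
      (simp add: nonneg_summable_on_complete)
  finally show ?thesis .
qed

lemma SUP_ennreal_eq_SUP_if: "(SUP n\<in>{n. Q n}. f n :: ennreal) = (SUP n. if Q n then f n else 0)"
proof (rule antisym)
  show "(SUP n\<in>{n. Q n}. f n) \<le> (SUP n. if Q n then f n else 0)"
  proof (rule SUP_least)
    fix x assume "x \<in> {n. Q n}"
    then show "f x \<le> (SUP n. if Q n then f n else 0)"
      using SUP_upper[of x UNIV "\<lambda>n. if Q n then f n else 0"] by simp
  qed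
  show "(SUP n. if Q n then f n else 0) \<le> (SUP n\<in>{n. Q n}. f n)"
    by (rule SUP_least) (auto intro: SUP_upper)
qed

lemma measurable_config_point:
  assumes "k \<in> {1..K}" shows "(\<lambda>z. fst (fst z) k n) \<in> borel_measurable (config_space K)"
proof -
  have "(\<lambda>z. fst (fst z)) \<in> measurable (config_space K) (PiM {1..K} (\<lambda>_. PiM UNIV (\<lambda>_. borel)))"
    unfolding config_space_def pp_space_def by measurable
  from measurable_compose[OF measurable_compose[OF this measurable_component_singleton[OF assms]]
      measurable_component_singleton[of n UNIV]]
  show ?thesis by simp
qed

lemma measurable_config_count:
  "k \<in> {1..K} \<Longrightarrow> (\<lambda>z. snd (fst z) k) \<in> measurable (config_space K) (count_space UNIV)"
  unfolding config_space_def pp_space_def by measurable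

lemma measurable_config_mark:
  "k \<in> {1..K} \<Longrightarrow> (\<lambda>z. snd z (b, k, n)) \<in> borel_measurable (config_space K)"
  unfolding config_space_def mark_idx_def by measurable

lemma measurable_covered_config: "Measurable.pred (config_space K) (covered_config K P \<beta> \<alpha>)"
proof -
  define intf where "intf k n z = (\<Sum>j\<in>{1..K}. \<Sum>m.
      if enat m < snd (fst z) j \<and> fst (fst z) j m \<noteq> fst (fst z) k n
      then ennreal (P j * snd z (False, j, m) * norm (fst (fst z) j m) powr - \<alpha>) else 0)"
    for k n and z :: config
  define sir where "sir k n z = (if enat n < snd (fst z) k
      then ennreal (P k * snd z (True, k, n) * norm (fst (fst z) k n) powr - \<alpha>) / intf k n z else 0)"
    for k n and z :: config
  have covered_iff:
    "covered_config K P \<beta> \<alpha> z \<longleftrightarrow> (\<exists>k\<in>{1..K}. ennreal (\<beta> k) < (SUP n. sir k n z))" for z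
    unfolding covered_config_def covered_def SIR_def interference_def sir_def intf_def
    by (simp add: SUP_ennreal_eq_SUP_if infsum_ennreal_eq_suminf)
  have sir: "sir k n \<in> borel_measurable (config_space K)" if k: "k \<in> {1..K}" for k n
  proof -
    note [measurable] =
      measurable_config_point[OF k] measurable_config_count[OF k] measurable_config_mark[OF k]
    have "intf k n \<in> borel_measurable (config_space K)"
      unfolding intf_def
    proof (rule borel_measurable_sum)
      fix j assume j: "j \<in> {1..K}"
      note [measurable] =
        measurable_config_point[OF j] measurable_config_count[OF j] measurable_config_mark[OF j]
      show "(\<lambda>z. \<Sum>m. if enat m < snd (fst z) j \<and> fst (fst z) j m \<noteq> fst (fst z) k n
          then ennreal (P j * snd z (False, j, m) * norm (fst (fst z) j m) powr - \<alpha>) else 0)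
        \<in> borel_measurable (config_space K)"
        by measurable
    qed
    then show ?thesis unfolding sir_def by measurable
  qed
  show ?thesis
    unfolding covered_iff
  proof (rule pred_intros_finite(4))
    fix k assume k: "k \<in> {1..K}"
    note [measurable] = sir[OF k]
    show "Measurable.pred (config_space K) (\<lambda>z. ennreal (\<beta> k) < (SUP n. sir k n z))"
      by measurable
  qed simp
qed

definition shape :: "(nat \<Rightarrow> nat) \<Rightarrow> (nat \<Rightarrow> nat) \<Rightarrow> bool \<times> nat \<times> nat \<Rightarrow> nat" where
  "shape \<Delta> \<Psi> i = (case i of (b, k, n) \<Rightarrow> if b then \<Delta> k else \<Psi> k)"

definition gamma_quantile_marks :: "nat \<Rightarrow> (nat \<Rightarrow> nat) \<Rightarrow> (nat \<Rightarrow> nat) \<Rightarrow>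
    (bool \<times> nat \<times> nat \<Rightarrow> real) \<Rightarrow> bool \<times> nat \<times> nat \<Rightarrow> real" where
  "gamma_quantile_marks K \<Delta> \<Psi> u = (\<lambda>i\<in>mark_idx K. quantile (gamma_law (shape \<Delta> \<Psi> i)) (u i))"

abbreviation uniform_marks :: "nat \<Rightarrow> (bool \<times> nat \<times> nat \<Rightarrow> real) measure" where
  "uniform_marks K \<equiv> PiM (mark_idx K) (\<lambda>_. unit_uniform)"

lemma measurable_gamma_quantile_marks:
  "gamma_quantile_marks K \<Delta> \<Psi> \<in> measurable (uniform_marks K) (PiM (mark_idx K) (\<lambda>_. borel))"
  unfolding gamma_quantile_marks_def
  by (intro measurable_restrict measurable_compose[OF measurable_component_singleton]
      measurable_quantile real_distribution_gamma_law)

lemma distr_gamma_quantile_marks: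
  "distr (uniform_marks K) (PiM (mark_idx K) (\<lambda>_. borel)) (gamma_quantile_marks K \<Delta> \<Psi>) =
    PiM (mark_idx K) (\<lambda>i. gamma_law (shape \<Delta> \<Psi> i))"
  unfolding gamma_quantile_marks_def
  by (simp add: distr_PiM_componentwise[OF prob_space_unit_uniform
      measurable_quantile[OF real_distribution_gamma_law]] distr_quantile[OF real_distribution_gamma_law]
      cong: PiM_cong)

lemma gamma_quantile_marks_mono:
  assumes "u \<in> space (uniform_marks K)" and "\<forall>k\<in>{1..K}. \<Delta>' k \<le> \<Delta> k \<and> \<Psi> k \<le> \<Psi>' k"
    and "k \<in> {1..K}"
  shows "gamma_quantile_marks K \<Delta>' \<Psi>' u (True, k, n) \<le> gamma_quantile_marks K \<Delta> \<Psi> u (True, k, n)"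
    and "gamma_quantile_marks K \<Delta> \<Psi> u (False, k, n) \<le> gamma_quantile_marks K \<Delta>' \<Psi>' u (False, k, n)"
proof -
  have idx: "(b, k, n) \<in> mark_idx K" for b using assms(3) by (simp add: mark_idx_def)
  then have "u (b, k, n) \<in> {0<..<1}" for b
    using assms(1) by (auto simp: space_PiM space_restrict_space)
  with assms(2,3) idx show
    "gamma_quantile_marks K \<Delta>' \<Psi>' u (True, k, n) \<le> gamma_quantile_marks K \<Delta> \<Psi> u (True, k, n)"
    "gamma_quantile_marks K \<Delta> \<Psi> u (False, k, n) \<le> gamma_quantile_marks K \<Delta>' \<Psi>' u (False, k, n)"
    by (auto simp: gamma_quantile_marks_def shape_def intro!: quantile_gamma_law_mono)
qed

lemma covered_config_gamma_quantile_mono: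
  assumes "u \<in> space (uniform_marks K)" and "\<forall>k\<in>{1..K}. P k \<ge> 0"
    and "\<forall>k\<in>{1..K}. \<Delta>' k \<le> \<Delta> k \<and> \<Psi> k \<le> \<Psi>' k"
    and "covered_config K P \<beta> \<alpha> (p, gamma_quantile_marks K \<Delta>' \<Psi>' u)"
  shows "covered_config K P \<beta> \<alpha> (p, gamma_quantile_marks K \<Delta> \<Psi> u)"
  using assms(4) unfolding covered_config_def fst_conv snd_conv
  by (rule covered_mono) (use assms(1-3) gamma_quantile_marks_mono in auto)

lemma (in prob_space) distr_gamma_marks:
  assumes "K > 0" and "gamma_marks M K X N \<Delta> \<Psi> h g"
  shows "distr M (PiM (mark_idx K) (\<lambda>_. borel)) (\<lambda>w. \<lambda>i\<in>mark_idx K. mark_var h g i w) =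
    PiM (mark_idx K) (\<lambda>i. gamma_law (shape \<Delta> \<Psi> i))"
proof -
  have law: "random_variable borel (mark_var h g i) \<and>
      distr M borel (mark_var h g i) = gamma_law (shape \<Delta> \<Psi> i)" if i: "i \<in> mark_idx K" for i
  proof -
    obtain b k n where i: "i = (b, k, n)" and k: "k \<in> {1..K}"
      using i by (auto simp: mark_idx_def)
    have mark_var: "mark_var h g (True, k, n) = h k n" "mark_var h g (False, k, n) = g k n"
      by (simp_all add: mark_var_def fun_eq_iff)
    have "distr M borel f = distr M lborel f" for f :: "'a \<Rightarrow> real"
      unfolding distr_def by (simp only: space_lborel sets_lborel)
    with assms(2) k show ?thesis
      unfolding i gamma_marks_def distributed_def
      by (cases b) (auto simp: mark_var shape_def gamma_law_def[symmetric] cong: measurable_cong_sets)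
  qed
  have "mark_idx K \<noteq> {}" using assms(1) by (auto simp: mark_idx_def)
  with assms(2) law
  have "distr M (PiM (mark_idx K) (\<lambda>_. borel)) (\<lambda>w. \<lambda>i\<in>mark_idx K. mark_var h g i w) =
      PiM (mark_idx K) (\<lambda>i. distr M borel (mark_var h g i))"
    unfolding gamma_marks_def by (subst indep_vars_iff_distr_eq_PiM'[symmetric]) auto
  with law show ?thesis by (auto intro: PiM_cong)
qed

lemma measurable_quantile_coupling:
  assumes "sets \<mu> = sets (pp_space K)"
  shows "(\<lambda>(p, u). (p, gamma_quantile_marks K \<Delta> \<Psi> u))
    \<in> measurable (\<mu> \<Otimes>\<^sub>M uniform_marks K) (config_space K)"
proof -
  note [measurable] = measurable_gamma_quantile_marks
  show ?thesis
    unfolding config_space_def measurable_cong_sets[OF sets_pair_measure_cong[OF assms refl] refl]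
    by measurable
qed

lemma sets_coupled_coverage:
  assumes "sets \<mu> = sets (pp_space K)"
  shows "{z \<in> space (\<mu> \<Otimes>\<^sub>M uniform_marks K).
      covered_config K P \<beta> \<alpha> (fst z, gamma_quantile_marks K \<Delta> \<Psi> (snd z))}
    \<in> sets (\<mu> \<Otimes>\<^sub>M uniform_marks K)"
  using measurable_compose[OF measurable_quantile_coupling[OF assms] measurable_covered_config]
  by (simp add: pred_def split_beta)

lemma (in prob_space) distr_config_eq_quantile_coupling:
  assumes "K > 0" and marks: "gamma_marks M K X N \<Delta> \<Psi> h g"
  defines "\<mu> \<equiv> distr M (pp_space K) (pp_var K X N)"
  shows "distr M (config_space K) (\<lambda>w. (pp_var K X N w, \<lambda>i\<in>mark_idx K. mark_var h g i w)) =
    distr (\<mu> \<Otimes>\<^sub>M uniform_marks K) (config_space K) (\<lambda>(p, u). (p, gamma_quantile_marks K \<Delta> \<Psi> u))"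
proof -
  let ?B = "PiM (mark_idx K) (\<lambda>_. borel)"
  let ?Q = "gamma_quantile_marks K \<Delta> \<Psi>"
  define Y where "Y = (\<lambda>w. \<lambda>i\<in>mark_idx K. mark_var h g i w)"
  have Z: "random_variable (pp_space K) (pp_var K X N)"
    and indep: "indep_set (sets (vimage_algebra (space M) (pp_var K X N) (pp_space K)))
      (sets (vimage_algebra (space M) Y ?B))"
    using marks unfolding gamma_marks_def Y_def by auto
  have Y: "random_variable ?B Y"
    using marks unfolding gamma_marks_def indep_vars_def2 Y_def by (auto intro!: measurable_restrict)
  have sets_\<mu>: "sets \<mu> = sets (pp_space K)" by (simp add: \<mu>_def)
  have "distr M (config_space K) (\<lambda>w. (pp_var K X N w, Y w)) = \<mu> \<Otimes>\<^sub>M distr M ?B Y"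
    unfolding config_space_def \<mu>_def by (rule distr_pair_eq_pair_measure_if_indep_set[OF Z Y indep])
  also have "distr M ?B Y = distr (uniform_marks K) ?B ?Q"
    using distr_gamma_marks[OF assms(1) marks] by (simp add: Y_def distr_gamma_quantile_marks)
  also have "\<mu> = distr \<mu> (pp_space K) (\<lambda>p. p)"
    using sets_\<mu> by (simp add: distr_id2)
  also have "distr \<mu> (pp_space K) (\<lambda>p. p) \<Otimes>\<^sub>M distr (uniform_marks K) ?B ?Q =
      distr (\<mu> \<Otimes>\<^sub>M uniform_marks K) (config_space K) (\<lambda>(p, u). (p, ?Q u))"
    unfolding config_space_def
    by (intro pair_measure_distr measurable_ident_sets[OF sets_\<mu>] measurable_gamma_quantile_marks
        prob_space_imp_sigma_finite prob_space.prob_space_distr prob_space_PiM prob_space_unit_uniform)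
  finally show ?thesis unfolding Y_def .
qed

lemma (in prob_space) coverage_prob_eq_coupled:
  assumes "K > 0" and marks: "gamma_marks M K X N \<Delta> \<Psi> h g"
  defines "\<mu> \<equiv> distr M (pp_space K) (pp_var K X N)"
  shows "coverage_prob M K P \<beta> \<alpha> X N h g = measure (\<mu> \<Otimes>\<^sub>M uniform_marks K)
    {z \<in> space (\<mu> \<Otimes>\<^sub>M uniform_marks K).
      covered_config K P \<beta> \<alpha> (fst z, gamma_quantile_marks K \<Delta> \<Psi> (snd z))}"
proof -
  let ?Q = "gamma_quantile_marks K \<Delta> \<Psi>"
  let ?C = "{z \<in> space (config_space K). covered_config K P \<beta> \<alpha> z}"
  define Z where "Z = (\<lambda>w. (pp_var K X N w, \<lambda>i\<in>mark_idx K. mark_var h g i w))"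
  have Z: "Z \<in> measurable M (config_space K)"
    using marks unfolding config_space_def gamma_marks_def indep_vars_def2 Z_def
    by (auto intro!: measurable_Pair measurable_restrict)
  have "covered K P \<beta> \<alpha> X N h g w = covered_config K P \<beta> \<alpha> (Z w)" for w
    unfolding covered_config_def Z_def pp_var_def
    by (rule covered_cong) (auto simp: mark_var_def mark_idx_def)
  then have "{w \<in> space M. covered K P \<beta> \<alpha> X N h g w} = Z -` ?C \<inter> space M"
    using measurable_space[OF Z] by auto
  then have "coverage_prob M K P \<beta> \<alpha> X N h g = measure (distr M (config_space K) Z) ?C"
    unfolding coverage_prob_def using Z measurable_covered_config by (simp add: measure_distr)
  also have "\<dots> = measure (\<mu> \<Otimes>\<^sub>M uniform_marks K)
      ((\<lambda>(p, u). (p, ?Q u)) -` ?C \<inter> space (\<mu> \<Otimes>\<^sub>M uniform_marks K))"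
    unfolding Z_def distr_config_eq_quantile_coupling[OF assms(1) marks] \<mu>_def
    using measurable_quantile_coupling measurable_covered_config by (simp add: measure_distr)
  also have "(\<lambda>(p, u). (p, ?Q u)) -` ?C \<inter> space (\<mu> \<Otimes>\<^sub>M uniform_marks K) =
      {z \<in> space (\<mu> \<Otimes>\<^sub>M uniform_marks K). covered_config K P \<beta> \<alpha> (fst z, ?Q (snd z))}"
    using measurable_space[OF measurable_quantile_coupling, of \<mu>] by (auto simp: \<mu>_def split_beta)
  finally show ?thesis .
qed

theorem theorem1:
  fixes M :: "'a measure"
    and K :: nat
    and X :: "nat \<Rightarrow> nat \<Rightarrow> 'a \<Rightarrow> real^2"
    and N :: "nat \<Rightarrow> 'a \<Rightarrow> enat"
    and P \<beta> :: "nat \<Rightarrow> real"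
    and \<alpha> :: real
    and \<Delta> \<Psi> \<Delta>' \<Psi>' :: "nat \<Rightarrow> nat"
    and h g h' g' :: "nat \<Rightarrow> nat \<Rightarrow> 'a \<Rightarrow> real"
  assumes "prob_space M"
    and "\<forall>k\<in>{1..K}. point_process M (N k) (X k)"
    and "\<forall>k\<in>{1..K}. stationary_pp M (PPset X N k)"
    and "\<forall>k\<in>{1..K}. P k > 0 \<and> \<beta> k > 0"
    and "\<forall>k\<in>{1..K}. \<Delta> k \<ge> 1 \<and> \<Psi> k \<ge> 1 \<and> \<Delta>' k \<ge> 1 \<and> \<Psi>' k \<ge> 1"
    and "gamma_marks M K X N \<Delta> \<Psi> h g"
    and "gamma_marks M K X N \<Delta>' \<Psi>' h' g'"
    and "\<forall>k\<in>{1..K}. \<Delta> k \<ge> \<Delta>' k \<and> \<Psi> k \<le> \<Psi>' k"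
  shows "coverage_prob M K P \<beta> \<alpha> X N h g \<ge> coverage_prob M K P \<beta> \<alpha> X N h' g'"
proof (cases "K = 0")
  case True
  then show ?thesis by (simp add: coverage_prob_def covered_def)
next
  case False
  interpret prob_space M by fact
  let ?\<mu> = "distr M (pp_space K) (pp_var K X N)"
  let ?E = "\<lambda>\<Delta> \<Psi>. {z \<in> space (?\<mu> \<Otimes>\<^sub>M uniform_marks K).
    covered_config K P \<beta> \<alpha> (fst z, gamma_quantile_marks K \<Delta> \<Psi> (snd z))}"
  interpret coupled: prob_space "?\<mu> \<Otimes>\<^sub>M uniform_marks K"
    using assms(6) unfolding gamma_marks_def
    by (intro prob_space_pair prob_space_distr prob_space_PiM prob_space_unit_uniform) simp
  have P: "\<forall>k\<in>{1..K}. P k \<ge> 0" and shapes: "\<forall>k\<in>{1..K}. \<Delta>' k \<le> \<Delta> k \<and> \<Psi> k \<le> \<Psi>' k"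
    using assms(4,8) by auto
  have "?E \<Delta>' \<Psi>' \<subseteq> ?E \<Delta> \<Psi>"
    using covered_config_gamma_quantile_mono[OF _ P shapes] by (auto simp: space_pair_measure)
  moreover have "?E \<Delta> \<Psi> \<in> sets (?\<mu> \<Otimes>\<^sub>M uniform_marks K)"
    by (rule sets_coupled_coverage) simp
  ultimately have "coupled.prob (?E \<Delta>' \<Psi>') \<le> coupled.prob (?E \<Delta> \<Psi>)"
    by (rule coupled.finite_measure_mono)
  moreover note coverage_prob_eq_coupled[OF _ assms(6), of P \<beta> \<alpha>]
    coverage_prob_eq_coupled[OF _ assms(7), of P \<beta> \<alpha>]
  ultimately show ?thesis using False by simp
qed

end
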